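(* Let $(\mathbf a,b)\in\mathbb{Z}^2\times\mathbb{N}$ with $\gcd(\mathbf a,b)=1$ (i.e. $\gcd(a_1,a_2,b)=1$), and let $\boldsymbol\beta\in\mathbb{R}^2$. Then there is an absolute constant $C>0$ such that for all $0<\varepsilon<1$, $$\sum_{0\le h\le b-1}\mathbb 1\left[\left\|h\tfrac{\mathbf a}{b}+\boldsymbol\beta\right\|<\varepsilon\right]\le C(\varepsilon b+1),$$ and for all $N\ge1$ (and $0<\varepsilon<1$), $$\sum_{1\le h\le N}\mathbb 1\left[\left\|h\tfrac{\mathbf a}{b}\right\|<\varepsilon\right]\le C\left((\varepsilon b+1)\frac{N}{b}\mathbb 1[N\ge b]+\min\{N,\varepsilon b\}\mathbb 1[N<b]\right).$$
   Context: $\|\mathbf x\|$ denotes the distance from $\mathbf x\in\mathbb{R}^2$ to the nearest point of $\mathbb{Z}^2$ with respect to the maximum norm; $\mathbb 1[\cdot]$ is the indicator of a condition. *)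

theory Defs
  imports Complex_Main
begin

definition torus_norm :: "real \<times> real \<Rightarrow> real" where
  "torus_norm x = (INF z\<in>(UNIV :: (int \<times> int) set).
      max \<bar>fst x - of_int (fst z)\<bar> \<bar>snd x - of_int (snd z)\<bar>)"

definition ind :: "bool \<Rightarrow> real" where
  "ind P = (if P then 1 else 0)"

end

theory Submission
  imports Defs "HOL-Number_Theory.Cong"
begin

(* Let g = gcd a1 b and b = m g. Writing h = q + m t with q < m and t < g, the first coordinate
   h a1/b + beta1 equals q c/m + beta1 modulo 1, where c = a1/g is coprime to m, and for fixed q
   the second coordinate is t a2/g plus a constant, with a2 coprime to g since gcd(a1,a2,b) = 1.
   For c/m in lowest terms, at most 2 e m + 1 of the shifted multiples q c/m + beta (q < m) lie
   within e of an integer, because q c - m z determines q modulo m. Hence one full period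
   contains at most (2 e m + 1)(2 e g + 1) <= 8 e b + 1 admissible h, and 1 <= h <= N meets at
   most N div b + 1 periods. When N < b, either e b <= 1 and no 0 < h < b is admissible
   (b would divide h a1 and h a2, hence h), or 8 e b + 1 <= 9 e b. *)

definition near_int :: "real \<Rightarrow> real \<Rightarrow> bool" where
  "near_int e x \<longleftrightarrow> (\<exists>z::int. \<bar>x - of_int z\<bar> < e)"

lemma near_int_add_of_int: "near_int e (x + of_int k) \<longleftrightarrow> near_int e x"
proof
  assume "near_int e (x + of_int k)"
  then obtain z :: int where "\<bar>x + of_int k - of_int z\<bar> < e" by (auto simp: near_int_def)
  then have "\<bar>x - of_int (z - k)\<bar> < e" by (simp add: algebra_simps)
  then show "near_int e x" unfolding near_int_def by blast
next
  assume "near_int e x"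
  then obtain z :: int where "\<bar>x - of_int z\<bar> < e" by (auto simp: near_int_def)
  then have "\<bar>x + of_int k - of_int (z + k)\<bar> < e" by (simp add: algebra_simps)
  then show "near_int e (x + of_int k)" unfolding near_int_def by blast
qed

lemma torus_norm_less_iff: "torus_norm (x, y) < e \<longleftrightarrow> near_int e x \<and> near_int e y"
proof -
  have "bdd_below (range (\<lambda>z::int \<times> int. max \<bar>x - of_int (fst z)\<bar> \<bar>y - of_int (snd z)\<bar>))"
    by (rule bdd_belowI[of _ 0]) auto
  then show ?thesis
    by (simp add: torus_norm_def near_int_def cINF_less_iff)
qed

lemma sum_ind_eq_card: "finite A \<Longrightarrow> (\<Sum>h\<in>A. ind (P h)) = real (card {h\<in>A. P h})"
  by (simp add: ind_def sum.If_cases Int_def)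

lemma card_ints_between:
  fixes R :: "int set" and lo hi :: real
  assumes "\<And>r. r \<in> R \<Longrightarrow> lo \<le> of_int r \<and> of_int r \<le> hi" and "lo \<le> hi"
  shows "real (card R) \<le> hi - lo + 1"
proof -
  have "R \<subseteq> {\<lceil>lo\<rceil>..\<lfloor>hi\<rfloor>}"
    using assms(1) by (auto simp: ceiling_le_iff le_floor_iff)
  then have "card R \<le> card {\<lceil>lo\<rceil>..\<lfloor>hi\<rfloor>}"
    by (rule card_mono[OF finite_atLeastAtMost_int])
  moreover have "\<lceil>lo\<rceil> \<le> \<lfloor>hi\<rfloor> + 1"
    using assms(2) real_of_int_floor_add_one_gt[of hi]
    by (simp add: ceiling_le_iff del: real_of_int_floor_add_one_gt)
  ultimately have "of_int (int (card R)) \<le> (of_int (\<lfloor>hi\<rfloor> + 1 - \<lceil>lo\<rceil>) :: real)"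
    unfolding of_int_le_iff by simp
  also have "\<dots> \<le> hi - lo + 1"
    using of_int_floor_le[of hi] le_of_int_ceiling[of lo] by linarith
  finally show ?thesis
    by simp
qed

lemma card_near_int_multiples:
  fixes c :: int and m :: nat and e \<beta> :: real
  assumes m: "m \<ge> 1" and coprime: "coprime c (int m)" and "e \<ge> 0"
  shows "real (card {q\<in>{0..<m}. near_int e (real q * c / m + \<beta>)}) \<le> 2 * e * m + 1"
proof -
  define Q where "Q = {q\<in>{0..<m}. near_int e (real q * c / m + \<beta>)}"
  have "\<forall>q\<in>Q. \<exists>z::int. \<bar>real q * c / m + \<beta> - z\<bar> < e"
    by (simp add: Q_def near_int_def)
  then obtain z :: "nat \<Rightarrow> int" where z: "\<And>q. q \<in> Q \<Longrightarrow> \<bar>real q * c / m + \<beta> - z q\<bar> < e"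
    by (metis bchoice)
  define r where "r q = int q * c - int m * z q" for q
  have r_bounds: "- m * \<beta> - e * m \<le> r q \<and> r q \<le> - m * \<beta> + e * m" if "q \<in> Q" for q
  proof -
    have "r q + m * \<beta> = (real q * c / m + \<beta> - z q) * m"
      using m by (simp add: r_def field_simps)
    then have "\<bar>r q + m * \<beta>\<bar> = \<bar>real q * c / m + \<beta> - z q\<bar> * m"
      by (simp add: abs_mult)
    also have "\<dots> \<le> e * m"
      using z[OF that] by (simp add: mult_right_mono)
    finally show ?thesis
      by (simp add: abs_le_iff algebra_simps)
  qed
  have "inj_on r Q"
  proof (rule inj_onI)
    fix q q' assume "q \<in> Q" "q' \<in> Q" "r q = r q'"
    then have "[int q * c = int q' * c] (mod int m)"
      unfolding r_def cong_iff_lin by (intro exI[of _ "z q' - z q"]) (simp add: algebra_simps)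
    then have "[int q = int q'] (mod int m)"
      using cong_mult_rcancel[OF coprime] by blast
    moreover have "q < m" "q' < m"
      using \<open>q \<in> Q\<close> \<open>q' \<in> Q\<close> by (simp_all add: Q_def)
    ultimately show "q = q'"
      using cong_less_imp_eq_int[of "int q" "int m" "int q'"] by simp
  qed
  then have "card Q = card (r ` Q)"
    by (simp add: card_image)
  also have "real \<dots> \<le> (- m * \<beta> + e * m) - (- m * \<beta> - e * m) + 1"
    using r_bounds \<open>e \<ge> 0\<close> by (intro card_ints_between) auto
  finally show ?thesis
    by (simp add: Q_def)
qed

lemma card_near_torus_factored:
  fixes c a :: int and m g :: nat and e \<beta>1 \<beta>2 :: real
  assumes m: "m \<ge> 1" and g: "g \<ge> 1" and "coprime c (int m)" and "coprime a (int g)"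
    and "e \<ge> 0"
  shows "real (card {h\<in>{0..<m * g}. near_int e (real h * c / m + \<beta>1)
                                    \<and> near_int e (real h * a / (m * g) + \<beta>2)})
           \<le> (2 * e * m + 1) * (2 * e * g + 1)"
proof -
  define S where "S = {h\<in>{0..<m * g}. near_int e (real h * c / m + \<beta>1)
                                     \<and> near_int e (real h * a / (m * g) + \<beta>2)}"
  define Q where "Q = {q\<in>{0..<m}. near_int e (real q * c / m + \<beta>1)}"
  define T where "T q = {t\<in>{0..<g}. near_int e (real t * a / g + (real q * a / (m * g) + \<beta>2))}"
    for q
  have "S \<subseteq> (\<lambda>(q, t). q + m * t) ` Sigma Q T"
  proof
    fix h assume h: "h \<in> S"
    define q t where "q = h mod m" and "t = h div m"
    have h_eq: "h = q + m * t"
      by (simp add: q_def t_def)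
    have "real h * c / m + \<beta>1 = real q * c / m + \<beta>1 + of_int (int t * c)"
      using m by (simp add: h_eq field_simps)
    then have "near_int e (real h * c / m + \<beta>1) \<longleftrightarrow> near_int e (real q * c / m + \<beta>1)"
      by (simp only: near_int_add_of_int)
    moreover have "real h * a / (m * g) + \<beta>2 = real t * a / g + (real q * a / (m * g) + \<beta>2)"
      using m g by (simp add: h_eq field_simps)
    moreover have "q < m" and "t < g"
      using h m by (simp_all add: S_def q_def t_def less_mult_imp_div_less mult.commute)
    ultimately have "q \<in> Q" and "t \<in> T q"
      using h by (simp_all only: S_def Q_def T_def mem_Collect_eq atLeastLessThan_iff) simp_all
    with h_eq show "h \<in> (\<lambda>(q, t). q + m * t) ` Sigma Q T"
      by force
  qed
  then have "card S \<le> card ((\<lambda>(q, t). q + m * t) ` Sigma Q T)"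
    by (intro card_mono) (simp_all add: Q_def T_def)
  also have "\<dots> \<le> card (Sigma Q T)"
    by (rule card_image_le) (simp add: Q_def T_def)
  also have "\<dots> = (\<Sum>q\<in>Q. card (T q))"
    by (simp add: Q_def T_def)
  finally have "real (card S) \<le> (\<Sum>q\<in>Q. real (card (T q)))"
    by (simp flip: of_nat_sum)
  also have "\<dots> \<le> (\<Sum>q\<in>Q. 2 * e * g + 1)"
    unfolding T_def by (intro sum_mono card_near_int_multiples) (use assms in auto)
  also have "\<dots> = real (card Q) * (2 * e * g + 1)"
    by simp
  also have "\<dots> \<le> (2 * e * m + 1) * (2 * e * g + 1)"
    unfolding Q_def by (intro mult_right_mono card_near_int_multiples) (use assms in auto)
  finally show ?thesis
    by (simp add: S_def)
qed

lemma card_near_torus_period: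
  fixes a1 a2 :: int and b :: nat and e \<beta>1 \<beta>2 :: real
  assumes b: "b \<ge> 1" and coprime: "gcd (gcd a1 a2) (int b) = 1" and e: "0 \<le> e" "e \<le> 1"
  shows "real (card {h\<in>{0..<b}. near_int e (real h * a1 / b + \<beta>1)
                              \<and> near_int e (real h * a2 / b + \<beta>2)}) \<le> 8 * e * b + 1"
proof -
  define g where "g = nat (gcd a1 (int b))"
  define m where "m = b div g"
  define c where "c = a1 div int g"
  have int_g: "int g = gcd a1 (int b)"
    by (simp add: g_def)
  have "g dvd b"
    by (metis int_g gcd_dvd2 int_dvd_int_iff)
  then have b_eq: "b = m * g"
    by (simp add: m_def)
  have g: "g \<ge> 1" and m: "m \<ge> 1"
    using b b_eq by (auto simp: Suc_le_eq)
  have a1_eq: "a1 = c * int g"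
    by (simp add: c_def int_g)
  have "coprime c (int m)"
    using div_gcd_coprime[of a1 "int b"] b by (simp add: c_def m_def int_g zdiv_int)
  moreover have "coprime a2 (int g)"
    using coprime by (simp add: int_g coprime_iff_gcd_eq_1 ac_simps)
  moreover have "real h * a1 / b = real h * c / m" for h
    using g by (simp add: a1_eq b_eq)
  ultimately have "real (card {h\<in>{0..<b}. near_int e (real h * a1 / b + \<beta>1)
                              \<and> near_int e (real h * a2 / b + \<beta>2)})
                  \<le> (2 * e * m + 1) * (2 * e * g + 1)"
    using card_near_torus_factored[OF m g _ _ e(1)] by (simp add: b_eq)
  also have "\<dots> \<le> 8 * e * b + 1"
  proof -
    have "e * e * b \<le> e * b"
      using e by (intro mult_right_mono mult_left_le) auto
    moreover have "e * m \<le> e * b" and "e * g \<le> e * b"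
      using e m g by (simp_all add: b_eq mult_left_mono)
    ultimately show ?thesis
      by (simp add: b_eq algebra_simps)
  qed
  finally show ?thesis .
qed

lemma near_int_mult_div_mod:
  fixes a :: int and b h :: nat
  assumes "b \<ge> 1"
  shows "near_int e (real h * a / b) \<longleftrightarrow> near_int e (real (h mod b) * a / b)"
proof -
  have "real h = real (h mod b) + real b * real (h div b)"
    by (metis mod_div_mult_eq of_nat_add of_nat_mult mult.commute)
  then have "real h * a / b = real (h mod b) * a / b + of_int (int (h div b) * a)"
    using assms by (simp add: field_simps)
  then show ?thesis
    by (simp only: near_int_add_of_int)
qed

lemma card_periodic_le:
  fixes P :: "nat \<Rightarrow> bool" and b N :: nat
  assumes "b \<ge> 1" and "\<And>h. P h \<longleftrightarrow> P (h mod b)"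
  shows "card {h\<in>{0..N}. P h} \<le> card {q\<in>{0..<b}. P q} * (N div b + 1)"
proof -
  have "{h\<in>{0..N}. P h} \<subseteq> (\<lambda>(q, t). q + b * t) ` ({q\<in>{0..<b}. P q} \<times> {0..N div b})"
  proof
    fix h assume h: "h \<in> {h\<in>{0..N}. P h}"
    then have "(h mod b, h div b) \<in> {q\<in>{0..<b}. P q} \<times> {0..N div b}"
      using assms by (simp add: div_le_mono)
    then show "h \<in> (\<lambda>(q, t). q + b * t) ` ({q\<in>{0..<b}. P q} \<times> {0..N div b})"
      by (rule rev_image_eqI) simp
  qed
  then have "card {h\<in>{0..N}. P h} \<le> card ((\<lambda>(q, t). q + b * t) ` ({q\<in>{0..<b}. P q} \<times> {0..N div b}))"
    by (intro card_mono) auto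
  also have "\<dots> \<le> card ({q\<in>{0..<b}. P q} \<times> {0..N div b})"
    by (rule card_image_le) auto
  finally show ?thesis
    by (simp add: card_cartesian_product)
qed

lemma card_near_torus_long_range:
  fixes a1 a2 :: int and b N :: nat and e :: real
  assumes b: "b \<ge> 1" and coprime: "gcd (gcd a1 a2) (int b) = 1" and e: "0 \<le> e" "e \<le> 1"
    and N: "b \<le> N"
  shows "real (card {h\<in>{1..N}. near_int e (real h * a1 / b) \<and> near_int e (real h * a2 / b)})
           \<le> 16 * (e * b + 1) * (N / b)"
proof -
  let ?P = "\<lambda>h. near_int e (real h * a1 / b) \<and> near_int e (real h * a2 / b)"
  have "card {h\<in>{1..N}. ?P h} \<le> card {h\<in>{0..N}. ?P h}"
    by (intro card_mono) auto
  also have "\<dots> \<le> card {q\<in>{0..<b}. ?P q} * (N div b + 1)"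
  proof (rule card_periodic_le[OF b])
    show "?P h \<longleftrightarrow> ?P (h mod b)" for h
      using near_int_mult_div_mod[OF b, of e h a1] near_int_mult_div_mod[OF b, of e h a2] by blast
  qed
  finally have "real (card {h\<in>{1..N}. ?P h}) \<le> real (card {q\<in>{0..<b}. ?P q} * (N div b + 1))"
    by (simp only: of_nat_le_iff)
  also have "\<dots> = real (card {q\<in>{0..<b}. ?P q}) * (real (N div b) + 1)"
    by (simp add: distrib_left)
  also have "\<dots> \<le> (8 * e * b + 1) * (2 * (N / b))"
  proof (rule mult_mono)
    show "real (card {q\<in>{0..<b}. ?P q}) \<le> 8 * e * b + 1"
      using card_near_torus_period[OF b coprime e, of 0 0] by simp
    have "real (N div b) \<le> N / b"
      by (rule of_nat_div_le_of_nat)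
    moreover have "1 \<le> N / b"
      using N b by simp
    ultimately show "real (N div b) + 1 \<le> 2 * (N / b)"
      by linarith
  qed (use e in auto)
  also have "\<dots> = (2 * (8 * e * b + 1)) * (N / b)"
    by simp
  also have "\<dots> \<le> 16 * (e * b + 1) * (N / b)"
    using e by (intro mult_right_mono) auto
  finally show ?thesis .
qed

lemma near_int_fraction_imp_dvd:
  fixes k :: int and b :: nat and e :: real
  assumes b: "b \<ge> 1" and e: "e * b \<le> 1" and near: "near_int e (of_int k / b)"
  shows "int b dvd k"
proof -
  obtain z :: int where "\<bar>of_int k / b - of_int z\<bar> < e"
    using near by (auto simp: near_int_def)
  then have "\<bar>of_int k / b - of_int z\<bar> * b < e * b"
    using b by (intro mult_strict_right_mono) auto
  also have "\<bar>of_int k / b - of_int z\<bar> * b = \<bar>of_int (k - int b * z)\<bar>"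
    using b by (simp add: abs_mult[symmetric] field_simps)
  finally have "\<bar>k - int b * z\<bar> < 1"
    using e by linarith
  then have "k = int b * z"
    by simp
  then show ?thesis
    by simp
qed

lemma not_near_torus_before_period:
  fixes a1 a2 :: int and b h :: nat and e :: real
  assumes b: "b \<ge> 1" and coprime: "gcd (gcd a1 a2) (int b) = 1" and e: "e * b \<le> 1"
    and h: "0 < h" "h < b"
  shows "\<not> (near_int e (real h * a1 / b) \<and> near_int e (real h * a2 / b))"
proof
  assume near: "near_int e (real h * a1 / b) \<and> near_int e (real h * a2 / b)"
  have "int b dvd int h * a" if "near_int e (real h * a / b)" for a
    using near_int_fraction_imp_dvd[OF b e, of "int h * a"] that by simp
  then have "int b dvd gcd (int h * a1) (int h * a2)"
    using near by simp
  then have "int b dvd int h * gcd a1 a2"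
    by (simp add: gcd_mult_distrib_int[symmetric])
  moreover have "coprime (int b) (gcd a1 a2)"
    using coprime by (simp add: coprime_iff_gcd_eq_1 gcd.commute)
  ultimately have "int b dvd int h"
    by (simp add: coprime_dvd_mult_left_iff)
  with h show False
    by (simp add: nat_dvd_not_less)
qed

lemma card_near_torus_short_range:
  fixes a1 a2 :: int and b N :: nat and e :: real
  assumes b: "b \<ge> 1" and coprime: "gcd (gcd a1 a2) (int b) = 1" and e: "0 \<le> e" "e \<le> 1"
    and N: "N < b"
  shows "real (card {h\<in>{1..N}. near_int e (real h * a1 / b) \<and> near_int e (real h * a2 / b)})
           \<le> 9 * min (real N) (e * b)" (is "real (card ?S) \<le> _")
proof (cases "e * b \<le> 1")
  case True
  then have empty: "?S = {}"
    using not_near_torus_before_period[OF b coprime] N by force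
  show ?thesis
    unfolding empty using e by simp
next
  case False
  have "card ?S \<le> card {h\<in>{0..<b}. near_int e (real h * a1 / b + 0)
                                    \<and> near_int e (real h * a2 / b + 0)}"
    using N by (intro card_mono) auto
  then have "real (card ?S) \<le> 8 * e * b + 1"
    using card_near_torus_period[OF b coprime e, of 0 0] by linarith
  moreover have "card ?S \<le> card {1..N}"
    by (rule card_mono) auto
  ultimately show ?thesis
    using False by simp
qed

theorem lemma4p2:
  shows "\<exists>C>0. \<forall>(a1::int) (a2::int) (b::nat) (\<beta>1::real) (\<beta>2::real) (\<epsilon>::real).
     b \<ge> 1 \<longrightarrow> gcd (gcd a1 a2) (int b) = 1 \<longrightarrow> 0 < \<epsilon> \<longrightarrow> \<epsilon> < 1 \<longrightarrow>
       (\<Sum>h\<in>{0..<b}. ind (torus_norm (real h * a1 / b + \<beta>1, real h * a2 / b + \<beta>2) < \<epsilon>))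
          \<le> C * (\<epsilon> * b + 1)
     \<and> (\<forall>N::nat. N \<ge> 1 \<longrightarrow>
       (\<Sum>h\<in>{1..N}. ind (torus_norm (real h * a1 / b, real h * a2 / b) < \<epsilon>))
          \<le> C * ((\<epsilon> * b + 1) * (real N / b) * ind (N \<ge> b)
                 + min (real N) (\<epsilon> * b) * ind (N < b)))"
proof (intro exI[of _ 16] conjI allI impI)
  show "(0::real) < 16"
    by simp
next
  fix a1 a2 :: int and b :: nat and \<beta>1 \<beta>2 \<epsilon> :: real
  assume "b \<ge> 1" "gcd (gcd a1 a2) (int b) = 1" "0 < \<epsilon>" "\<epsilon> < 1"
  then show "(\<Sum>h\<in>{0..<b}. ind (torus_norm (real h * a1 / b + \<beta>1, real h * a2 / b + \<beta>2) < \<epsilon>))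
      \<le> 16 * (\<epsilon> * b + 1)"
    using card_near_torus_period[of b a1 a2 \<epsilon> \<beta>1 \<beta>2]
    by (simp add: sum_ind_eq_card torus_norm_less_iff)
next
  fix a1 a2 :: int and b N :: nat and \<epsilon> :: real
  assume b: "b \<ge> 1" and coprime: "gcd (gcd a1 a2) (int b) = 1" and "0 < \<epsilon>" "\<epsilon> < 1"
    and "N \<ge> 1"
  then have \<epsilon>: "0 \<le> \<epsilon>" "\<epsilon> \<le> 1"
    by simp_all
  show "(\<Sum>h\<in>{1..N}. ind (torus_norm (real h * a1 / b, real h * a2 / b) < \<epsilon>))
      \<le> 16 * ((\<epsilon> * b + 1) * (real N / b) * ind (N \<ge> b) + min (real N) (\<epsilon> * b) * ind (N < b))"
  proof (cases "b \<le> N")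
    case True
    then show ?thesis
      using card_near_torus_long_range[OF b coprime \<epsilon> True]
      by (simp add: sum_ind_eq_card torus_norm_less_iff) (simp add: ind_def algebra_simps)
  next
    case False
    then show ?thesis
      using card_near_torus_short_range[OF b coprime \<epsilon>, of N]
      by (simp add: sum_ind_eq_card torus_norm_less_iff) (simp add: ind_def)
  qed
qed

end
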